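(* Let $n$ be a positive integer with $n\mid (q-1)$, and let $C$ be a cyclic code of length $n$ over $\mathbb{F}_q$ with complete defining set $Z\subseteq R_n$. Suppose $\ell$ is a divisor of $n$ such that $Z$ contains a coset $\beta G$ (with $\beta\in R_n$) of the subgroup $G$ of $R_n$ of order $\ell$, and $R_n\setminus Z$ contains a consecutive set of length $\frac{n}{\ell}-1$. Then the minimum distance of the dual code $C^{\perp}$ is exactly $\frac{n}{\ell}$.
   Context: Let $q$ be a prime power and $n\mid(q-1)$, so that the set $R_n$ of all $n$-th roots of unity is contained in $\mathbb{F}_q$ and is a cyclic group of order $n$; let $\alpha$ be a generator. For any $Z\subseteq R_n$, the cyclic code of length $n$ over $\mathbb{F}_q$ with complete defining set $Z$ is the ideal generated by $\prod_{\beta\in Z}(x-\beta)$ in $\mathbb{F}_q[x]/(x^n-1)$, identified with a subspace of $\mathbb{F}_q^n$ via coefficient vectors. A subset $\Omega\subseteq R_n$ is a consecutive set of length $\ell'$ if there exist a primitive $n$-th root of unity $\beta$ and an integer $i$ with $\Omega=\{\beta^i,\beta^{i+1},\dots,\beta^{i+\ell'-1}\}$. *)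

theory Defs
  imports "HOL-Computational_Algebra.Polynomial"
begin

text \<open>Vectors of length n over a field are represented as functions nat \<Rightarrow> 'a
  vanishing outside {0..<n}; a polynomial of degree < n corresponds to its
  coefficient function.\<close>

definition roots_of_unity :: "nat \<Rightarrow> 'a::field set" where
  "roots_of_unity n = {x. x ^ n = 1}"

definition xn_minus_1 :: "nat \<Rightarrow> 'a::field poly" where
  "xn_minus_1 n = monom 1 n - 1"

definition gen_poly :: "'a::field set \<Rightarrow> 'a poly" where
  "gen_poly Z = (\<Prod>\<beta>\<in>Z. [:-\<beta>, 1:])"

definition cyclic_code :: "nat \<Rightarrow> 'a::field set \<Rightarrow> (nat \<Rightarrow> 'a) set" where
  "cyclic_code n Z = {coeff ((f * gen_poly Z) mod xn_minus_1 n) | f. True}"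

definition dual_code :: "nat \<Rightarrow> (nat \<Rightarrow> 'a::field) set \<Rightarrow> (nat \<Rightarrow> 'a) set" where
  "dual_code n C = {v. (\<forall>i\<ge>n. v i = 0) \<and> (\<forall>c\<in>C. (\<Sum>i<n. v i * c i) = 0)}"

definition hamming_dist :: "nat \<Rightarrow> (nat \<Rightarrow> 'a) \<Rightarrow> (nat \<Rightarrow> 'a) \<Rightarrow> nat" where
  "hamming_dist n u v = card {i. i < n \<and> u i \<noteq> v i}"

definition min_distance :: "nat \<Rightarrow> (nat \<Rightarrow> 'a) set \<Rightarrow> nat" where
  "min_distance n C = Inf {hamming_dist n u v | u v. u \<in> C \<and> v \<in> C \<and> u \<noteq> v}"

definition primitive_root :: "nat \<Rightarrow> 'a::field \<Rightarrow> bool" where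
  "primitive_root n \<beta> \<longleftrightarrow> \<beta> ^ n = 1 \<and> (\<forall>k. 0 < k \<and> k < n \<longrightarrow> \<beta> ^ k \<noteq> 1)"

definition consecutive_set :: "nat \<Rightarrow> nat \<Rightarrow> 'a::field set \<Rightarrow> bool" where
  "consecutive_set n L \<Omega> \<longleftrightarrow>
     (\<exists>\<beta> (i::int). primitive_root n \<beta> \<and> \<Omega> = (\<lambda>j. \<beta> powi (i + int j)) ` {..<L})"

definition is_subgroup :: "'a::field set \<Rightarrow> 'a set \<Rightarrow> bool" where
  "is_subgroup G H \<longleftrightarrow> G \<subseteq> H \<and> 1 \<in> G \<and> (\<forall>x\<in>G. \<forall>y\<in>G. x * y \<in> G) \<and> (\<forall>x\<in>G. inverse x \<in> G)"

end

theory Submission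
  imports Defs
begin

(* Codewords of C are the coefficient vectors of the polynomials h of degree < n that vanish
   on Z.

   Upper bound: if beta G is contained in Z, summing h over beta G and using the orthogonality
   of the characters z |-> z^i of G gives l * (sum over l | i of c_i beta^i) = 0.  As l divides
   q - 1 it is invertible in F_q, so the vector (beta^i if l | i, else 0), of weight n/l, lies
   in the dual code.

   Lower bound: for gamma not in Z the polynomial sum_{i<n} (x/gamma)^i vanishes at all other
   n-th roots of unity, hence lies in C, so every dual word w satisfies
   sum_i w_i gamma^(-i) = 0.  For gamma running through a consecutive set of length n/l - 1
   these are n/l - 1 consecutive power-sum conditions, and the Vandermonde argument of the
   BCH bound forces weight at least n/l. *)

lemma poly_eq_sum_lessThan:
  fixes p :: "'a::comm_semiring_1 poly"
  assumes "degree p < n"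
  shows "poly p x = (\<Sum>i<n. coeff p i * x ^ i)"
proof -
  have "(\<Sum>i\<le>degree p. coeff p i * x ^ i) = (\<Sum>i<n. coeff p i * x ^ i)"
    by (rule sum.mono_neutral_left) (use assms in \<open>auto simp: coeff_eq_0\<close>)
  then show ?thesis
    using poly_altdef[of p x] by simp
qed

lemma prod_linear_factors_dvd:
  fixes h :: "'a::field poly"
  assumes "finite Z" "\<forall>z\<in>Z. poly h z = 0"
  shows "(\<Prod>z\<in>Z. [:-z, 1:]) dvd h"
  using assms
proof (induction Z rule: finite_induct)
  case empty
  then show ?case by simp
next
  case (insert d F)
  then obtain k where k: "h = (\<Prod>z\<in>F. [:-z, 1:]) * k"
    by (auto elim: dvdE)
  have "(\<Prod>z\<in>F. d - z) * poly k d = 0"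
    using insert.prems k by (simp add: poly_prod)
  moreover have "(\<Prod>z\<in>F. d - z) \<noteq> 0"
    using insert.hyps by (simp add: prod_zero_iff)
  ultimately obtain k' where k': "k = [:-d, 1:] * k'"
    by (auto simp: poly_eq_0_iff_dvd elim: dvdE)
  have "h = (\<Prod>z\<in>insert d F. [:-z, 1:]) * k'"
    by (simp only: k k' prod.insert[OF insert.hyps] mult_ac)
  then show ?case ..
qed

lemma degree_xn_minus_1 [simp]:
  assumes "0 < n"
  shows "degree (xn_minus_1 n :: 'a::field poly) = n"
proof -
  have "xn_minus_1 n = monom (1::'a) n + [:-1:]"
    by (simp add: xn_minus_1_def one_pCons)
  then show ?thesis
    using assms by (simp add: degree_add_eq_left degree_monom_eq)
qed

lemma poly_xn_minus_1 [simp]: "poly (xn_minus_1 n) x = x ^ n - 1"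
  by (simp add: xn_minus_1_def poly_monom)

lemma xn_minus_1_neq_0:
  assumes "0 < n"
  shows "xn_minus_1 n \<noteq> (0 :: 'a::field poly)"
proof
  assume "xn_minus_1 n = (0 :: 'a poly)"
  then have "degree (xn_minus_1 n :: 'a poly) = 0"
    by simp
  then show False
    using assms by simp
qed

lemma roots_of_unity_eq_poly_roots: "roots_of_unity n = {x. poly (xn_minus_1 n) x = 0}"
  by (simp add: roots_of_unity_def)

lemma finite_roots_of_unity: "0 < n \<Longrightarrow> finite (roots_of_unity n :: 'a::field set)"
  unfolding roots_of_unity_eq_poly_roots by (intro poly_roots_finite xn_minus_1_neq_0)

lemma card_roots_of_unity_le: "0 < n \<Longrightarrow> card (roots_of_unity n :: 'a::field set) \<le> n"
  using card_poly_roots_bound[OF xn_minus_1_neq_0, of n]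
  by (simp add: roots_of_unity_eq_poly_roots)

lemma zero_notin_roots_of_unity: "0 < n \<Longrightarrow> 0 \<notin> roots_of_unity n"
  by (simp add: roots_of_unity_def power_0_left)

section \<open>Finite fields and their multiplicative subgroups\<close>

lemma of_nat_card_UNIV_eq_0: "of_nat (card (UNIV :: 'a::{finite,ring_1} set)) = (0::'a)"
proof -
  have shift: "bij (\<lambda>y::'a. y + 1)"
    by (rule bij_betw_byWitness[where f' = "\<lambda>y. y - 1"]) auto
  have "(\<Sum>y\<in>UNIV. y) = (\<Sum>y\<in>UNIV. y + (1::'a))"
    using sum.reindex_bij_betw[OF shift, of id] by simp
  also have "\<dots> = (\<Sum>y\<in>UNIV. y) + of_nat (card (UNIV :: 'a set))"
    by (simp add: sum.distrib)
  finally show ?thesis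
    by simp
qed

lemma of_nat_neq_0_if_dvd_card_minus_1:
  assumes "k dvd card (UNIV :: 'a::{finite,ring_1} set) - 1"
  shows "of_nat k \<noteq> (0::'a)"
proof
  assume k: "of_nat k = (0::'a)"
  obtain t where t: "card (UNIV :: 'a set) - 1 = k * t"
    using assms ..
  have "card (UNIV :: 'a set) = k * t + 1"
    using t finite_UNIV_card_ge_0[OF finite_UNIV[where 'a = 'a]] by linarith
  then have "of_nat (card (UNIV :: 'a set)) = (1::'a)"
    using k by simp
  then show False
    using of_nat_card_UNIV_eq_0[where 'a = 'a] by simp
qed

lemma subgroup_mult_bij:
  fixes G :: "'a::field set"
  assumes G: "is_subgroup G (- {0})" "finite G" and z: "z \<in> G"
  shows "bij_betw (\<lambda>g. z * g) G G"
proof -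
  have "inj_on (\<lambda>g. z * g) G"
    using G z by (auto simp: is_subgroup_def inj_on_def)
  moreover have "(\<lambda>g. z * g) ` G \<subseteq> G"
    using G z by (auto simp: is_subgroup_def)
  ultimately show ?thesis
    using G(2) by (simp add: bij_betw_def endo_inj_surj)
qed

lemma subgroup_power_card:
  fixes G :: "'a::field set"
  assumes G: "is_subgroup G (- {0})" "finite G" and z: "z \<in> G"
  shows "z ^ card G = 1"
proof -
  have "\<Prod>G = (\<Prod>g\<in>G. z * g)"
    using prod.reindex_bij_betw[OF subgroup_mult_bij[OF G z], of id] by simp
  also have "\<dots> = z ^ card G * \<Prod>G"
    by (simp add: prod.distrib)
  finally have "1 * \<Prod>G = z ^ card G * \<Prod>G"
    by simp
  moreover have "\<Prod>G \<noteq> 0"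
    using G by (auto simp: is_subgroup_def)
  ultimately show ?thesis
    by (metis mult_right_cancel)
qed

lemma subgroup_sum_powers:
  fixes G :: "'a::field set"
  assumes G: "is_subgroup G (- {0})" "finite G"
  shows "(\<Sum>\<zeta>\<in>G. \<zeta> ^ i) = (if card G dvd i then of_nat (card G) else 0)"
proof (cases "card G dvd i")
  case True
  then obtain t where "i = card G * t" ..
  then show ?thesis
    using True subgroup_power_card[OF G] by (simp add: power_mult)
next
  case False
  have "\<exists>z\<in>G. z ^ i \<noteq> 1"
  proof (rule ccontr)
    assume all_one: "\<not> ?thesis"
    define r where "r = i mod card G"
    have "0 < card G"
      using G by (auto simp: is_subgroup_def card_gt_0_iff)
    then have r: "0 < r" "r < card G"
      using False by (auto simp: r_def mod_greater_zero_iff_not_dvd)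
    have "z ^ r = z ^ i" if "z \<in> G" for z
    proof -
      have "z ^ i = (z ^ card G) ^ (i div card G) * z ^ r"
        by (simp add: r_def flip: power_mult power_add)
      then show ?thesis
        using subgroup_power_card[OF G that] by simp
    qed
    then have "G \<subseteq> roots_of_unity r"
      using all_one by (auto simp: roots_of_unity_def)
    then have "card G \<le> r"
      using card_mono[OF finite_roots_of_unity] card_roots_of_unity_le r(1) le_trans by blast
    then show False
      using r by simp
  qed
  then obtain z where z: "z \<in> G" "z ^ i \<noteq> 1" ..
  have "(\<Sum>\<zeta>\<in>G. \<zeta> ^ i) = (\<Sum>\<zeta>\<in>G. (z * \<zeta>) ^ i)"
    using sum.reindex_bij_betw[OF subgroup_mult_bij[OF G z(1)], of "\<lambda>\<zeta>. \<zeta> ^ i"] by simp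
  also have "\<dots> = z ^ i * (\<Sum>\<zeta>\<in>G. \<zeta> ^ i)"
    by (simp add: power_mult_distrib sum_distrib_left)
  finally have "(z ^ i - 1) * (\<Sum>\<zeta>\<in>G. \<zeta> ^ i) = 0"
    by (simp add: algebra_simps)
  then show ?thesis
    using z False by simp
qed

lemma cyclic_code_eq:
  fixes Z :: "'a::field set"
  assumes n: "0 < n" and Z: "Z \<subseteq> roots_of_unity n"
  shows "cyclic_code n Z = {coeff h |h. degree h < n \<and> (\<forall>z\<in>Z. poly h z = 0)}"
proof (intro equalityI subsetI)
  fix c assume "c \<in> cyclic_code n Z"
  then obtain f where c: "c = coeff ((f * gen_poly Z) mod xn_minus_1 n)"
    by (auto simp: cyclic_code_def)
  define h where "h = (f * gen_poly Z) mod xn_minus_1 n"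
  have "degree h < n"
    using degree_mod_less'[OF xn_minus_1_neq_0[OF n]] n by (cases "h = 0") (auto simp: h_def)
  moreover have "poly h z = 0" if z: "z \<in> Z" for z
  proof -
    have "poly (xn_minus_1 n) z = 0"
      using z Z by (auto simp: roots_of_unity_def)
    then have "poly h z = poly f z * poly (gen_poly Z) z"
      by (simp add: h_def poly_mod)
    also have "\<dots> = 0"
      using z finite_subset[OF Z finite_roots_of_unity[OF n]] by (simp add: gen_poly_def poly_prod)
    finally show ?thesis .
  qed
  ultimately show "c \<in> {coeff h |h. degree h < n \<and> (\<forall>z\<in>Z. poly h z = 0)}"
    using c h_def by blast
next
  fix c assume "c \<in> {coeff h |h. degree h < n \<and> (\<forall>z\<in>Z. poly h z = 0)}"
  then obtain h where c: "c = coeff h" and h: "degree h < n" "\<forall>z\<in>Z. poly h z = 0"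
    by blast
  have "gen_poly Z dvd h"
    unfolding gen_poly_def
    using finite_subset[OF Z finite_roots_of_unity[OF n]] h(2) by (rule prod_linear_factors_dvd)
  then obtain f where "h = f * gen_poly Z"
    by (metis dvdE mult.commute)
  moreover have "h mod xn_minus_1 n = h"
    using h(1) n by (simp add: mod_poly_less)
  ultimately show "c \<in> cyclic_code n Z"
    unfolding cyclic_code_def c by (metis (mono_tags, lifting) mem_Collect_eq)
qed

lemma dual_code_diff:
  assumes "u \<in> dual_code n C" "v \<in> dual_code n C"
  shows "(\<lambda>i. u i - v i) \<in> dual_code n C"
  using assms by (simp add: dual_code_def algebra_simps sum_subtractf)

lemma dual_code_vanishes_at_inverse:
  fixes Z :: "'a::field set"
  assumes n: "0 < n" and Z: "Z \<subseteq> roots_of_unity n"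
    and \<gamma>: "\<gamma> \<in> roots_of_unity n - Z" and w: "w \<in> dual_code n (cyclic_code n Z)"
  shows "(\<Sum>i<n. w i * inverse \<gamma> ^ i) = 0"
proof -
  define h where "h = (\<Sum>i<n. monom (inverse \<gamma> ^ i) i)"
  have coeff_h: "coeff h i = (if i < n then inverse \<gamma> ^ i else 0)" for i
    by (simp add: h_def coeff_sum coeff_monom)
  have "degree h < n"
    using n by (intro degree_lessI) (auto simp: coeff_h)
  moreover have "poly h \<delta> = 0" if \<delta>: "\<delta> \<in> Z" for \<delta>
  proof -
    define r where "r = \<delta> * inverse \<gamma>"
    have "r \<noteq> 1"
      using \<gamma> \<delta> zero_notin_roots_of_unity[OF n] by (auto simp: r_def field_simps)
    moreover have "r ^ n = 1"
      using \<gamma> \<delta> Z by (auto simp: r_def roots_of_unity_def power_mult_distrib power_inverse)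
    moreover have "poly h \<delta> = (\<Sum>i<n. r ^ i)"
      by (simp add: h_def r_def poly_sum poly_monom power_mult_distrib mult.commute)
    ultimately show ?thesis
      by (simp add: sum_gp_strict)
  qed
  ultimately have "coeff h \<in> cyclic_code n Z"
    by (auto simp: cyclic_code_eq[OF n Z])
  then show ?thesis
    using w by (auto simp: dual_code_def coeff_h)
qed

lemma dual_code_coset_vector:
  fixes Z :: "'a::field set"
  assumes n: "0 < n" and Z: "Z \<subseteq> roots_of_unity n"
    and G: "is_subgroup G (- {0})" "finite G" "of_nat (card G) \<noteq> (0::'a)"
    and \<beta>G: "(\<lambda>g. \<beta> * g) ` G \<subseteq> Z"
  shows "(\<lambda>i. if i < n \<and> card G dvd i then \<beta> ^ i else 0) \<in> dual_code n (cyclic_code n Z)"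
  unfolding dual_code_def
proof (intro CollectI conjI allI impI ballI)
  fix c assume "c \<in> cyclic_code n Z"
  then obtain h where c: "c = coeff h" and h: "degree h < n" "\<forall>z\<in>Z. poly h z = 0"
    by (auto simp: cyclic_code_eq[OF n Z])
  have "0 = (\<Sum>\<zeta>\<in>G. poly h (\<beta> * \<zeta>))"
    by (intro sum.neutral[symmetric] ballI) (use h(2) \<beta>G in auto)
  also have "\<dots> = (\<Sum>i<n. c i * \<beta> ^ i * (\<Sum>\<zeta>\<in>G. \<zeta> ^ i))"
    by (simp add: poly_eq_sum_lessThan[OF h(1)] c power_mult_distrib sum_distrib_left mult.assoc
        sum.swap[of _ G])
  also have "\<dots> = of_nat (card G) * (\<Sum>i<n. (if i < n \<and> card G dvd i then \<beta> ^ i else 0) * c i)"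
    by (simp add: subgroup_sum_powers[OF G(1,2)] sum_distrib_left) (intro sum.cong; simp)
  finally show "(\<Sum>i<n. (if i < n \<and> card G dvd i then \<beta> ^ i else 0) * c i) = 0"
    using G(3) by simp
qed simp

section \<open>The BCH bound for the dual code\<close>

lemma primitive_root_inverse: "primitive_root n b \<Longrightarrow> primitive_root n (inverse b)"
  by (simp add: primitive_root_def power_inverse)

lemma primitive_root_power_inj:
  assumes b: "primitive_root n b"
  shows "inj_on (\<lambda>i. b ^ i) {..<n}"
proof (rule linorder_inj_onI')
  fix i j assume ij: "i \<in> {..<n}" "j \<in> {..<n}" "i < j"
  then have "b \<noteq> 0"
    using b by (auto simp: primitive_root_def power_0_left)
  moreover have "b ^ (j - i) \<noteq> 1"
    using b ij by (simp add: primitive_root_def)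
  moreover have "b ^ j = b ^ i * b ^ (j - i)"
    using ij by (simp flip: power_add)
  ultimately show "b ^ i \<noteq> b ^ j"
    by auto
qed

text \<open>Pair \<open>u\<close> with the values of the polynomial vanishing at every node of its support except
  \<open>x i0\<close>.\<close>

lemma vandermonde_support_bound:
  fixes u x :: "'i \<Rightarrow> 'a::field"
  assumes I: "finite I" and x: "inj_on x I"
    and moments: "\<And>j. j < m \<Longrightarrow> (\<Sum>i\<in>I. u i * x i ^ j) = 0"
    and i0: "i0 \<in> I" "u i0 \<noteq> 0"
  shows "m < card {i\<in>I. u i \<noteq> 0}"
proof (rule ccontr)
  assume few: "\<not> ?thesis"
  define S where "S = {i\<in>I. u i \<noteq> 0} - {i0}"
  define P where "P = (\<Prod>i\<in>S. [:- x i, 1:])"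
  have "card S < m"
    using few i0 I card_gt_0_iff[of "{i\<in>I. u i \<noteq> 0}"] by (auto simp: S_def)
  moreover have "degree P \<le> card S"
    unfolding P_def using degree_prod_sum_le[of S "\<lambda>i. [:- x i, 1:]"] I by (simp add: S_def)
  ultimately have "degree P < m"
    by linarith
  have "u i0 * poly P (x i0) = (\<Sum>i\<in>I. u i * poly P (x i))"
    using I i0 by (subst sum.mono_neutral_right[of I "{i0}"])
      (auto simp: P_def S_def poly_prod finite_subset[OF _ I])
  also have "\<dots> = (\<Sum>j<m. coeff P j * (\<Sum>i\<in>I. u i * x i ^ j))"
    using \<open>degree P < m\<close>
    by (simp add: poly_eq_sum_lessThan sum_distrib_left sum_distrib_right mult_ac sum.swap[of _ I])
  also have "\<dots> = 0"
    using moments by simp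
  finally have "poly P (x i0) = 0"
    using i0 by simp
  moreover have "poly P (x i0) = (\<Prod>i\<in>S. x i0 - x i)"
    by (simp add: P_def poly_prod)
  moreover have "(\<Prod>i\<in>S. x i0 - x i) \<noteq> 0"
    using I i0 x by (auto simp: S_def inj_on_eq_iff)
  ultimately show False
    by simp
qed

lemma dual_code_bch_bound:
  fixes Z :: "'a::field set"
  assumes n: "0 < n" and Z: "Z \<subseteq> roots_of_unity n"
    and \<Omega>: "consecutive_set n m \<Omega>" "\<Omega> \<subseteq> roots_of_unity n - Z"
    and w: "w \<in> dual_code n (cyclic_code n Z)" "w \<noteq> (\<lambda>_. 0)"
  shows "m < hamming_dist n w (\<lambda>_. 0)"
proof -
  obtain b s where b: "primitive_root n b" and \<Omega>_eq: "\<Omega> = (\<lambda>j. b powi (s + int j)) ` {..<m}"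
    using \<Omega>(1) by (auto simp: consecutive_set_def)
  have "b \<noteq> 0"
    using b n by (auto simp: primitive_root_def power_0_left)
  obtain i0 where i0: "w i0 \<noteq> 0"
    using w(2) by auto
  have "i0 < n"
    using i0 w(1) leI unfolding dual_code_def by blast
  define t where "t = inverse (b powi s)"
  have "t \<noteq> 0"
    using \<open>b \<noteq> 0\<close> by (simp add: t_def)
  have "(\<Sum>i<n. (w i * t ^ i) * (inverse b ^ i) ^ j) = 0" if "j < m" for j
  proof -
    have "inverse (b powi (s + int j)) = t * inverse b ^ j"
      using \<open>b \<noteq> 0\<close> by (simp add: power_int_add t_def power_inverse)
    moreover have "(\<Sum>i<n. w i * inverse (b powi (s + int j)) ^ i) = 0"
      using that \<Omega>(2) by (intro dual_code_vanishes_at_inverse[OF n Z _ w(1)]) (auto simp: \<Omega>_eq)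
    moreover have "(t * inverse b ^ j) ^ i = t ^ i * (inverse b ^ i) ^ j" for i
      by (metis power_mult power_mult_distrib mult.commute)
    ultimately show ?thesis
      by (simp add: mult.assoc)
  qed
  then have "m < card {i\<in>{..<n}. w i * t ^ i \<noteq> 0}"
    using primitive_root_power_inj[OF primitive_root_inverse[OF b]] \<open>i0 < n\<close> i0 \<open>t \<noteq> 0\<close>
    by (intro vandermonde_support_bound[of "{..<n}" _ m _ i0]) auto
  then show ?thesis
    using \<open>t \<noteq> 0\<close> by (simp add: hamming_dist_def)
qed

lemma card_multiples_lessThan:
  assumes "l dvd n"
  shows "card {i::nat. i < n \<and> l dvd i} = n div l"
proof (cases "l = 0")
  case False
  obtain t where t: "n = l * t"
    using assms ..
  have "{i. i < n \<and> l dvd i} = (\<lambda>k. l * k) ` {..<t}"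
    using False by (auto simp: t)
  moreover have "inj_on (\<lambda>k. l * k) {..<t}"
    using False by (auto simp: inj_on_def)
  ultimately show ?thesis
    using False by (simp add: card_image t)
qed (use assms in simp)

lemma hamming_weight_coset_vector:
  fixes \<beta> :: "'a::semiring_1_no_zero_divisors"
  assumes "\<beta> \<noteq> 0" "l dvd n"
  shows "hamming_dist n (\<lambda>i. if i < n \<and> l dvd i then \<beta> ^ i else 0) (\<lambda>_. 0) = n div l"
proof -
  have "{i. i < n \<and> (if i < n \<and> l dvd i then \<beta> ^ i else 0) \<noteq> 0} = {i. i < n \<and> l dvd i}"
    using assms(1) by auto
  then show ?thesis
    by (simp add: hamming_dist_def card_multiples_lessThan[OF assms(2)])
qed

lemma min_distance_eqI:
  fixes C :: "(nat \<Rightarrow> 'a::ab_group_add) set"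
  assumes diff: "\<And>u v. u \<in> C \<Longrightarrow> v \<in> C \<Longrightarrow> (\<lambda>i. u i - v i) \<in> C"
    and lower: "\<And>w. w \<in> C \<Longrightarrow> w \<noteq> (\<lambda>_. 0) \<Longrightarrow> d \<le> hamming_dist n w (\<lambda>_. 0)"
    and v: "v \<in> C" "v \<noteq> (\<lambda>_. 0)" "hamming_dist n v (\<lambda>_. 0) = d"
  shows "min_distance n C = d"
  unfolding min_distance_def
proof (rule cInf_eq_minimum)
  have "(\<lambda>_. 0) \<in> C"
    using diff[OF v(1) v(1)] by simp
  then show "d \<in> {hamming_dist n u v |u v. u \<in> C \<and> v \<in> C \<and> u \<noteq> v}"
    using v by blast
next
  fix e assume "e \<in> {hamming_dist n u v |u v. u \<in> C \<and> v \<in> C \<and> u \<noteq> v}"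
  then obtain u u' where e: "e = hamming_dist n u u'" and u: "u \<in> C" "u' \<in> C" "u \<noteq> u'"
    by blast
  have "(\<lambda>i. u i - u' i) \<noteq> (\<lambda>_. 0)"
    using u(3) by (auto simp: fun_eq_iff)
  then have "d \<le> hamming_dist n (\<lambda>i. u i - u' i) (\<lambda>_. 0)"
    using lower diff[OF u(1,2)] by blast
  then show "d \<le> e"
    by (simp add: e hamming_dist_def)
qed

theorem proposition2p8:
  fixes n l :: nat and Z :: "'a::{finite,field} set"
  assumes "0 < n" and "n dvd card (UNIV :: 'a set) - 1"
    and "Z \<subseteq> roots_of_unity n"
    and "l dvd n"
    and "\<exists>G \<beta>. is_subgroup G (roots_of_unity n) \<and> card G = l \<and>
               \<beta> \<in> roots_of_unity n \<and> (\<lambda>g. \<beta> * g) ` G \<subseteq> Z"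
    and "\<exists>\<Omega>. \<Omega> \<subseteq> roots_of_unity n - Z \<and> consecutive_set n (n div l - 1) \<Omega>"
  shows "min_distance n (dual_code n (cyclic_code n Z)) = n div l"
proof -
  obtain G \<beta> where G: "is_subgroup G (roots_of_unity n)" "card G = l"
    and \<beta>: "\<beta> \<in> roots_of_unity n" "(\<lambda>g. \<beta> * g) ` G \<subseteq> Z"
    using assms(5) by blast
  obtain \<Omega> where \<Omega>: "\<Omega> \<subseteq> roots_of_unity n - Z" "consecutive_set n (n div l - 1) \<Omega>"
    using assms(6) by blast
  have G_units: "is_subgroup G (- {0})"
    using G(1) zero_notin_roots_of_unity[OF assms(1)] by (auto simp: is_subgroup_def)
  have "of_nat l \<noteq> (0::'a)"
    using dvd_trans[OF assms(4,2)] by (rule of_nat_neq_0_if_dvd_card_minus_1)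
  define v where "v = (\<lambda>i. if i < n \<and> l dvd i then \<beta> ^ i else 0)"
  show ?thesis
  proof (rule min_distance_eqI)
    show "v \<in> dual_code n (cyclic_code n Z)"
      unfolding v_def using dual_code_coset_vector[OF assms(1,3) G_units] G(2) \<beta>(2)
        \<open>of_nat l \<noteq> 0\<close> by simp
    show "v \<noteq> (\<lambda>_. 0)"
      using assms(1) by (auto simp: v_def fun_eq_iff)
    show "hamming_dist n v (\<lambda>_. 0) = n div l"
      unfolding v_def using \<beta>(1) zero_notin_roots_of_unity[OF assms(1)] assms(4)
      by (intro hamming_weight_coset_vector) auto
  next
    fix w assume "w \<in> dual_code n (cyclic_code n Z)" "w \<noteq> (\<lambda>_. 0)"
    then have "n div l - 1 < hamming_dist n w (\<lambda>_. 0)"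
      by (rule dual_code_bch_bound[OF assms(1,3) \<Omega>(2,1)])
    then show "n div l \<le> hamming_dist n w (\<lambda>_. 0)"
      by linarith
  qed (rule dual_code_diff)
qed

end
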